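(* Let $\mathcal{G}=(G,\lambda)$ be a simple temporal clique, $G=(V,E)$, and let $\mathcal{T}^+=(V,E^+_T)$ be obtained by the backward construction. Then the backward fireworks cover $S^+_T=\{\{u,v\}\in E:(u,v)\in E^+_T\}\cup\{\{u,v\}\in E: u \text{ is a collector}\}$ is a temporal spanner of $\mathcal{G}$.
   Context: A simple temporal clique is a pair $\mathcal{G}=(G,\lambda)$ where $G=(V,E)$ is the complete graph on a finite vertex set $V$ and $\lambda:E\to\mathbb{N}$ assigns to each edge a single integer label such that any two distinct edges sharing an endpoint have different labels; the label of an arc $(x,y)$ is $\lambda(\{x,y\})$. A journey from $x$ to $y$ is a sequence of vertices $x=u_0,\dots,u_k=y$ ($k\ge1$) with $\lambda(\{u_{i-1},u_i\})<\lambda(\{u_i,u_{i+1}\})$ for $1\le i<k$. A set $E'\subseteq E$ is a temporal spanner of $\mathcal{G}$ if for every ordered pair of distinct vertices $x,y$ there is a journey from $x$ to $y$ using only edges of $E'$. For a vertex $v$, $e^+(v)$ is the edge incident to $v$ with largest label. Backward construction: let $E^+$ be the set of arcs $(v,u)$ with $\{u,v\}=e^+(v)$, except that if $e^+(u)=e^+(v)=\{u,v\}$ only one of the two arcs $(u,v),(v,u)$ is included (arbitrarily). Initialize $E^+_T:=E^+$. For every vertex $v$ of in-degree at least $2$ in $(V,E^+)$, let $(u_1,v),\dots,(u_\ell,v)$ be its in-arcs in $E^+$, where $(u_\ell,v)$ has the smallest label; for each $i<\ell$, if $u_i$ has in-degree $0$ in $(V,E^+)$, replace $(u_i,v)$ by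 $(v,u_i)$ in $E^+_T$, and otherwise remove $(u_i,v)$ from $E^+_T$. Set $\mathcal{T}^+=(V,E^+_T)$. A collector is a vertex of in-degree $0$ in $\mathcal{T}^+$. *)

theory Defs
  imports Main
begin

text \<open>Vertices have type 'a, V is a finite vertex set, edges of the complete graph
  are two-element sets, and the labelling is lam :: 'a set => nat (only its values on
  edges matter).\<close>

definition clique_edges :: "'a set \<Rightarrow> 'a set set" where
  "clique_edges V = {{u, v} | u v. u \<in> V \<and> v \<in> V \<and> u \<noteq> v}"

definition simple_temporal_clique :: "'a set \<Rightarrow> ('a set \<Rightarrow> nat) \<Rightarrow> bool" where
  "simple_temporal_clique V lam \<longleftrightarrow> finite V \<and>
     (\<forall>e\<in>clique_edges V. \<forall>f\<in>clique_edges V. e \<noteq> f \<and> e \<inter> f \<noteq> {} \<longrightarrow> lam e \<noteq> lam f)"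

definition journey :: "'a set \<Rightarrow> ('a set \<Rightarrow> nat) \<Rightarrow> 'a set set \<Rightarrow> 'a \<Rightarrow> 'a \<Rightarrow> 'a list \<Rightarrow> bool" where
  "journey V lam E' x y ps \<longleftrightarrow>
     length ps \<ge> 2 \<and> hd ps = x \<and> last ps = y \<and>
     (\<forall>i < length ps - 1. {ps ! i, ps ! Suc i} \<in> E' \<and> {ps ! i, ps ! Suc i} \<in> clique_edges V) \<and>
     (\<forall>i. Suc i < length ps - 1 \<longrightarrow> lam {ps ! i, ps ! Suc i} < lam {ps ! Suc i, ps ! Suc (Suc i)})"

definition temporal_spanner :: "'a set \<Rightarrow> ('a set \<Rightarrow> nat) \<Rightarrow> 'a set set \<Rightarrow> bool" where
  "temporal_spanner V lam E' \<longleftrightarrow> E' \<subseteq> clique_edges V \<and>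
     (\<forall>x\<in>V. \<forall>y\<in>V. x \<noteq> y \<longrightarrow> (\<exists>ps. journey V lam E' x y ps))"

text \<open>e^+(v): the edge incident to v with largest label (unique by properness).\<close>
definition eplus :: "'a set \<Rightarrow> ('a set \<Rightarrow> nat) \<Rightarrow> 'a \<Rightarrow> 'a set" where
  "eplus V lam v = (THE e. e \<in> clique_edges V \<and> v \<in> e \<and>
       (\<forall>f\<in>clique_edges V. v \<in> f \<longrightarrow> lam f \<le> lam e))"

definition eplus_arcs_full :: "'a set \<Rightarrow> ('a set \<Rightarrow> nat) \<Rightarrow> ('a \<times> 'a) set" where
  "eplus_arcs_full V lam = {(v, u). v \<in> V \<and> u \<in> V \<and> u \<noteq> v \<and> {u, v} = eplus V lam v}"

text \<open>A valid choice of E^+: all candidate arcs, except that for each pair with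
  e^+(u) = e^+(v) = {u,v} exactly one of the two opposite arcs is kept (arbitrarily).\<close>
definition is_Eplus :: "'a set \<Rightarrow> ('a set \<Rightarrow> nat) \<Rightarrow> ('a \<times> 'a) set \<Rightarrow> bool" where
  "is_Eplus V lam A \<longleftrightarrow> A \<subseteq> eplus_arcs_full V lam \<and>
     (\<forall>(v, u) \<in> eplus_arcs_full V lam. (v, u) \<notin> A \<longrightarrow> (u, v) \<in> A) \<and>
     (\<forall>(v, u) \<in> A. (u, v) \<notin> A)"

definition indeg :: "('a \<times> 'a) set \<Rightarrow> 'a \<Rightarrow> nat" where
  "indeg A v = card {u. (u, v) \<in> A}"

definition min_in_arc :: "('a set \<Rightarrow> nat) \<Rightarrow> ('a \<times> 'a) set \<Rightarrow> 'a \<Rightarrow> 'a \<Rightarrow> bool" where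
  "min_in_arc lam A u v \<longleftrightarrow> (u, v) \<in> A \<and> (\<forall>w. (w, v) \<in> A \<longrightarrow> lam {u, v} \<le> lam {w, v})"

definition backward_ET :: "('a set \<Rightarrow> nat) \<Rightarrow> ('a \<times> 'a) set \<Rightarrow> ('a \<times> 'a) set" where
  "backward_ET lam A =
     {(u, v). (u, v) \<in> A \<and> (indeg A v < 2 \<or> min_in_arc lam A u v)} \<union>
     {(v, u) | u v. (u, v) \<in> A \<and> indeg A v \<ge> 2 \<and> \<not> min_in_arc lam A u v \<and> indeg A u = 0}"

definition collector :: "'a set \<Rightarrow> ('a \<times> 'a) set \<Rightarrow> 'a \<Rightarrow> bool" where
  "collector V T u \<longleftrightarrow> u \<in> V \<and> indeg T u = 0"

definition fireworks_cover :: "'a set \<Rightarrow> ('a \<times> 'a) set \<Rightarrow> 'a set set" where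
  "fireworks_cover V T =
     {{u, v} | u v. {u, v} \<in> clique_edges V \<and> (u, v) \<in> T} \<union>
     {{u, v} | u v. {u, v} \<in> clique_edges V \<and> collector V T u}"

end

theory Submission
  imports Defs
begin

text \<open>Every arc (w,z) of \<open>\<T>\<^sup>+\<close> followed by an arc (z,y) of \<open>\<T>\<^sup>+\<close> has increasing labels, and
  every vertex that is not a collector has an in-arc.  So, to reach y from x through an
  arc (z,y), walk backwards along in-arcs with strictly decreasing labels; this stops at
  x itself or at a collector z.  A collector only has out-arcs of \<open>E\<^sup>+\<close>, i.e. (z,y) carries
  the largest label at z, so the cover edge {x,z} can be prepended.\<close>

lemma doubleton_in_clique_edges_iff:
  "{u, v} \<in> clique_edges V \<longleftrightarrow> u \<in> V \<and> v \<in> V \<and> u \<noteq> v"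
  unfolding clique_edges_def by (auto simp: doubleton_eq_iff)

lemma finite_clique_edges: "finite V \<Longrightarrow> finite (clique_edges V)"
  by (rule finite_subset[of _ "Pow V"]) (auto simp: clique_edges_def)

lemma indeg_eq_0_iff: "finite R \<Longrightarrow> indeg R v = 0 \<longleftrightarrow> (\<forall>u. (u, v) \<notin> R)"
proof -
  assume "finite R"
  moreover have "{u. (u, v) \<in> R} \<subseteq> fst ` R" by force
  ultimately have "finite {u. (u, v) \<in> R}" by (meson finite_imageI finite_subset)
  then show ?thesis by (simp add: indeg_def)
qed

lemma journey_edge:
  "{x, y} \<in> E' \<Longrightarrow> {x, y} \<in> clique_edges V \<Longrightarrow> journey V lam E' x y [x, y]"
  by (simp add: journey_def)

lemma journey_snoc:
  assumes J: "journey V lam E' x z ps"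
    and e: "{z, y} \<in> E'" "{z, y} \<in> clique_edges V"
    and l: "lam {ps ! (length ps - 2), z} < lam {z, y}"
  shows "journey V lam E' x y (ps @ [y])"
proof -
  have len: "length ps \<ge> 2" using J by (simp add: journey_def)
  then have "ps \<noteq> []" by auto
  then have hd: "hd (ps @ [y]) = x" and z: "ps ! (length ps - 1) = z"
    using J last_conv_nth[of ps] by (simp_all add: journey_def)
  have "{(ps @ [y]) ! i, (ps @ [y]) ! Suc i} \<in> E' \<inter> clique_edges V"
    if "i < length ps" for i
    using J e z len that
    by (cases "i = length ps - 1") (auto simp: journey_def nth_append Suc_diff_Suc)
  moreover have "lam {(ps @ [y]) ! i, (ps @ [y]) ! Suc i}
      < lam {(ps @ [y]) ! Suc i, (ps @ [y]) ! Suc (Suc i)}"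
    if "Suc i < length ps" for i
    using J l z len that
    by (cases "i = length ps - 2") (auto simp: journey_def nth_append Suc_diff_Suc numeral_2_eq_2)
  ultimately show ?thesis using len hd by (auto simp: journey_def)
qed

lemma eplus_greatest:
  assumes clique: "simple_temporal_clique V lam" and f: "f \<in> clique_edges V" "v \<in> f"
  shows "eplus V lam v \<in> clique_edges V \<and> v \<in> eplus V lam v \<and>
    (\<forall>g\<in>clique_edges V. v \<in> g \<longrightarrow> lam g \<le> lam (eplus V lam v))"
proof -
  let ?F = "{g \<in> clique_edges V. v \<in> g}"
  have "finite (clique_edges V)"
    using clique finite_clique_edges unfolding simple_temporal_clique_def by blast
  then have "finite ?F" by simp
  then have "finite (lam ` ?F)" "lam ` ?F \<noteq> {}"
    using f by auto
  then obtain e where e: "e \<in> ?F" "lam e = Max (lam ` ?F)"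
    using Max_in by (metis (no_types, lifting) imageE)
  have greatest: "lam g \<le> lam e" if "g \<in> ?F" for g
    using e \<open>finite (lam ` ?F)\<close> that by simp
  have "\<exists>!e. e \<in> clique_edges V \<and> v \<in> e \<and> (\<forall>g\<in>clique_edges V. v \<in> g \<longrightarrow> lam g \<le> lam e)"
  proof (rule ex1I[of _ e])
    fix e' assume e': "e' \<in> clique_edges V \<and> v \<in> e' \<and> (\<forall>g\<in>clique_edges V. v \<in> g \<longrightarrow> lam g \<le> lam e')"
    then have "lam e' \<le> lam e" "lam e \<le> lam e'" using e greatest by auto
    then have "lam e' = lam e" by simp
    moreover have "e' \<inter> e \<noteq> {}" using e e' by blast
    ultimately show "e' = e"
      using clique e e' unfolding simple_temporal_clique_def by blast
  qed (use e greatest in auto)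
  then show ?thesis unfolding eplus_def by (rule theI')
qed

lemma label_less_eplus:
  assumes clique: "simple_temporal_clique V lam"
    and f: "f \<in> clique_edges V" "v \<in> f" "f \<noteq> eplus V lam v"
  shows "lam f < lam (eplus V lam v)"
proof -
  have e: "eplus V lam v \<in> clique_edges V" "v \<in> eplus V lam v" "lam f \<le> lam (eplus V lam v)"
    using eplus_greatest[OF clique f(1,2)] f by auto
  have "lam f \<noteq> lam (eplus V lam v)"
    using clique f e(1,2) unfolding simple_temporal_clique_def by blast
  with e(3) show ?thesis by simp
qed

locale backward_construction =
  fixes V :: "'a set" and lam :: "'a set \<Rightarrow> nat" and A :: "('a \<times> 'a) set"
  assumes clique: "simple_temporal_clique V lam"
    and Eplus: "is_Eplus V lam A"
begin

abbreviation Tplus :: "('a \<times> 'a) set" where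
  "Tplus \<equiv> backward_ET lam A"

abbreviation cover :: "'a set set" where
  "cover \<equiv> fireworks_cover V Tplus"

lemma finite_V: "finite V"
  using clique by (simp add: simple_temporal_clique_def)

lemma Eplus_arc: "(v, u) \<in> A \<Longrightarrow> v \<in> V \<and> u \<in> V \<and> u \<noteq> v \<and> {u, v} = eplus V lam v"
  using Eplus unfolding is_Eplus_def eplus_arcs_full_def by blast

lemma Eplus_asym: "(v, u) \<in> A \<Longrightarrow> (u, v) \<notin> A"
  using Eplus unfolding is_Eplus_def by blast

lemma finite_Eplus: "finite A"
  by (rule finite_subset[of _ "V \<times> V"]) (use Eplus_arc finite_V in auto)

lemma Eplus_arc_label_greatest:
  assumes "(v, u) \<in> A" "w \<in> V" "w \<noteq> v" "w \<noteq> u"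
  shows "lam {v, w} < lam {v, u}"
proof -
  have a: "v \<in> V" "u \<in> V" "u \<noteq> v" "{u, v} = eplus V lam v"
    using Eplus_arc[OF assms(1)] by auto
  have "{v, w} \<noteq> eplus V lam v"
    using a(4) assms(3,4) by (auto simp: doubleton_eq_iff)
  then have "lam {v, w} < lam (eplus V lam v)"
    using label_less_eplus[OF clique] a assms by (simp add: doubleton_in_clique_edges_iff)
  then show ?thesis using a(4) by (simp add: insert_commute)
qed

lemma min_in_arc_exists: "(u, v) \<in> A \<Longrightarrow> \<exists>m. min_in_arc lam A m v"
  using ex_has_least_nat[of "\<lambda>w. (w, v) \<in> A" u "\<lambda>w. lam {w, v}"]
  unfolding min_in_arc_def by blast

lemma Tplus_cases [consumes 1, case_names kept reversed]:
  assumes "(a, b) \<in> Tplus"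
  obtains (kept) "(a, b) \<in> A" "indeg A b < 2 \<or> min_in_arc lam A a b"
    | (reversed) "(b, a) \<in> A" "indeg A a \<ge> 2" "\<not> min_in_arc lam A b a" "indeg A b = 0"
  using assms unfolding backward_ET_def by auto

lemma Tplus_arc: "(a, b) \<in> Tplus \<Longrightarrow> a \<in> V \<and> b \<in> V \<and> a \<noteq> b"
  by (erule Tplus_cases) (auto dest: Eplus_arc)

lemma finite_Tplus: "finite Tplus"
  by (rule finite_subset[of _ "V \<times> V"]) (use Tplus_arc finite_V in auto)

text \<open>A kept arc (z,y) is the largest edge at z.  A reversed arc (z,y) comes from a
  non-minimal in-arc (y,z) of \<open>E\<^sup>+\<close> at a vertex z of in-degree at least 2, where only the
  minimal in-arc survives, so (w,z) is that minimal arc.\<close>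

lemma Tplus_label_increasing:
  assumes wz: "(w, z) \<in> Tplus" and zy: "(z, y) \<in> Tplus"
  shows "lam {w, z} < lam {z, y}"
  using zy
proof (cases rule: Tplus_cases)
  case kept
  have "w \<noteq> y"
  proof
    assume "w = y"
    with wz have "(y, z) \<in> Tplus" by simp
    then show False using kept Eplus_asym[of z y] by (cases rule: Tplus_cases) simp_all
  qed
  then show ?thesis
    using Eplus_arc_label_greatest[of z y w] kept Tplus_arc[OF wz] by (simp add: insert_commute)
next
  case reversed
  have "indeg A z \<noteq> 0"
    using reversed(1) indeg_eq_0_iff[OF finite_Eplus] by blast
  from wz have "(w, z) \<in> A \<and> min_in_arc lam A w z"
  proof (cases rule: Tplus_cases)
    case kept
    then show ?thesis using reversed(2) by simp
  next
    case reversed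
    then show ?thesis using \<open>indeg A z \<noteq> 0\<close> by simp
  qed
  then have "lam {w, z} \<le> lam {y, z}" "w \<noteq> y" "lam {w, z} \<noteq> lam {y, z}"
    using reversed(1,3) clique Eplus_arc[of w z] Eplus_arc[of y z]
    unfolding min_in_arc_def simple_temporal_clique_def
    by (auto simp: doubleton_in_clique_edges_iff doubleton_eq_iff)
  then show ?thesis by (simp add: insert_commute)
qed

lemma collector_out_arc_in_Eplus:
  assumes "collector V Tplus z" "(z, y) \<in> Tplus"
  shows "(z, y) \<in> A"
  using assms(2)
proof (cases rule: Tplus_cases)
  case reversed
  then obtain m where "min_in_arc lam A m z" using min_in_arc_exists by blast
  then have "(m, z) \<in> Tplus" unfolding backward_ET_def min_in_arc_def by blast
  then show ?thesis
    using assms(1) indeg_eq_0_iff[OF finite_Tplus] unfolding collector_def by blast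
qed

lemma Tplus_arc_in_cover: "(a, b) \<in> Tplus \<Longrightarrow> {a, b} \<in> cover"
proof -
  assume ab: "(a, b) \<in> Tplus"
  then have "{a, b} \<in> clique_edges V"
    using Tplus_arc by (simp add: doubleton_in_clique_edges_iff)
  with ab show ?thesis unfolding fireworks_cover_def by blast
qed

lemma collector_edge_in_cover:
  "collector V Tplus z \<Longrightarrow> x \<in> V \<Longrightarrow> x \<noteq> z \<Longrightarrow> {x, z} \<in> cover"
  unfolding fireworks_cover_def collector_def
  by (auto simp: insert_commute doubleton_in_clique_edges_iff)

lemma cover_subset_clique_edges: "cover \<subseteq> clique_edges V"
  unfolding fireworks_cover_def by blast

lemma journey_through_Tplus_arc:
  "(z, y) \<in> Tplus \<Longrightarrow> x \<in> V \<Longrightarrow> x \<noteq> y \<Longrightarrow> \<exists>qs. journey V lam cover x y (qs @ [z, y])"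
proof (induction "lam {z, y}" arbitrary: z y rule: less_induct)
  case less
  have zy: "{z, y} \<in> cover" "{z, y} \<in> clique_edges V"
    using less.prems(1) Tplus_arc_in_cover Tplus_arc by (auto simp: doubleton_in_clique_edges_iff)
  consider "x = z" | "x \<noteq> z" "collector V Tplus z" | w where "x \<noteq> z" "(w, z) \<in> Tplus"
    using Tplus_arc[OF less.prems(1)] indeg_eq_0_iff[OF finite_Tplus]
    unfolding collector_def by blast
  then show ?case
  proof cases
    case 1
    then show ?thesis using journey_edge[OF zy] by (intro exI[of _ "[]"]) simp
  next
    case 2
    have l: "lam {x, z} < lam {z, y}"
      using Eplus_arc_label_greatest[OF collector_out_arc_in_Eplus[OF 2(2) less.prems(1)]]
        less.prems(2,3) 2(1) by (simp add: insert_commute)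
    have xz: "{x, z} \<in> cover"
      using collector_edge_in_cover[OF 2(2) less.prems(2) 2(1)] .
    have "journey V lam cover x z [x, z]"
      using journey_edge[OF xz subsetD[OF cover_subset_clique_edges xz]] .
    then have "journey V lam cover x y ([x, z] @ [y])"
      by (rule journey_snoc[OF _ zy]) (simp add: l)
    then show ?thesis by (intro exI[of _ "[x]"]) simp
  next
    case 3
    have l: "lam {w, z} < lam {z, y}" using Tplus_label_increasing[OF 3(2) less.prems(1)] .
    then obtain qs where "journey V lam cover x z (qs @ [w, z])"
      using less.hyps 3 less.prems(2) by blast
    then have "journey V lam cover x y ((qs @ [w, z]) @ [y])"
      by (rule journey_snoc[OF _ zy]) (simp add: l nth_append)
    then show ?thesis by (intro exI[of _ "qs @ [w]"]) simp
  qed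
qed

lemma cover_is_temporal_spanner: "temporal_spanner V lam cover"
  unfolding temporal_spanner_def
proof (intro conjI cover_subset_clique_edges ballI impI)
  fix x y assume xy: "x \<in> V" "y \<in> V" "x \<noteq> y"
  show "\<exists>ps. journey V lam cover x y ps"
  proof (cases "collector V Tplus y")
    case True
    then have "{x, y} \<in> cover" using collector_edge_in_cover xy by blast
    then show ?thesis using journey_edge[OF _ subsetD[OF cover_subset_clique_edges]] by blast
  next
    case False
    then obtain z where "(z, y) \<in> Tplus"
      using xy indeg_eq_0_iff[OF finite_Tplus] unfolding collector_def by blast
    then show ?thesis using journey_through_Tplus_arc xy by blast
  qed
qed

end

theorem theorem4:
  fixes V :: "'a set" and lam :: "'a set \<Rightarrow> nat" and Eplus :: "('a \<times> 'a) set"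
  assumes "simple_temporal_clique V lam"
    and "is_Eplus V lam Eplus"
  shows "temporal_spanner V lam (fireworks_cover V (backward_ET lam Eplus))"
proof -
  interpret backward_construction V lam Eplus
    using assms by unfold_locales
  show ?thesis by (rule cover_is_temporal_spanner)
qed

end
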